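(* Let $\Theta_0,\Theta_1$ be quantum channels from a finite-dimensional system $A$ to a finite-dimensional system $B$, and $\lambda\in[0,1]$. Suppose one receives a single use of a channel that equals $\Theta_0$ with probability $\lambda$ and $\Theta_1$ with probability $1-\lambda$, and one may prepare any state $\sigma$ on $A\otimes C$ for any finite-dimensional ancilla $C$, apply the unknown channel tensored with the identity on $C$, and then perform only an incoherent measurement on $B\otimes C$ (a POVM all of whose elements are diagonal in the incoherent product basis), guessing $i\in\{0,1\}$. The optimal probability $P_c(\lambda,\Theta_0,\Theta_1)$ of guessing $i$ correctly is $$P_c(\lambda,\Theta_0,\Theta_1)=\frac12+\frac12\max_{|\psi\rangle}\|T(|\psi\rangle\langle\psi|)\|_1,\qquad T=\Delta\big[\lambda\Theta_0-(1-\lambda)\Theta_1\big],$$ where the maximum is over pure states on $A$.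
   Context: Every finite-dimensional system carries a fixed orthonormal incoherent basis; composite systems use the product basis. $\Delta(\rho)=\sum_i|i\rangle\langle i|\rho|i\rangle\langle i|$ is the total dephasing map. $\|X\|_1=\operatorname{tr}\sqrt{X^\dagger X}$ is the trace norm. *)

theory Defs
  imports "Jordan_Normal_Form.Matrix"
begin

definition mtrace :: "complex mat \<Rightarrow> complex" where
  "mtrace M = (\<Sum>i<dim_row M. M $$ (i,i))"

definition adj :: "complex mat \<Rightarrow> complex mat" where
  "adj X = mat (dim_col X) (dim_row X) (\<lambda>(i,j). cnj (X $$ (j,i)))"

definition psd :: "nat \<Rightarrow> complex mat \<Rightarrow> bool" where
  "psd n M \<longleftrightarrow> M \<in> carrier_mat n n \<and>
     (\<forall>v \<in> carrier_vec n. let z = conjugate v \<bullet> (M *\<^sub>v v) in Im z = 0 \<and> Re z \<ge> 0)"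

definition density :: "nat \<Rightarrow> complex mat \<Rightarrow> bool" where
  "density n \<rho> \<longleftrightarrow> psd n \<rho> \<and> mtrace \<rho> = 1"

definition psd_sqrt :: "complex mat \<Rightarrow> complex mat" where
  "psd_sqrt M = (THE S. psd (dim_row M) S \<and> S * S = M)"

definition trace_norm :: "complex mat \<Rightarrow> real" where
  "trace_norm X = Re (mtrace (psd_sqrt (adj X * X)))"

(* total dephasing in the incoherent (computational) basis *)
definition dephase :: "complex mat \<Rightarrow> complex mat" where
  "dephase M = mat (dim_row M) (dim_col M) (\<lambda>(i,j). if i = j then M $$ (i,i) else 0)"

definition proj :: "complex vec \<Rightarrow> complex mat" where
  "proj \<psi> = mat (dim_vec \<psi>) (dim_vec \<psi>) (\<lambda>(i,j). \<psi> $ i * cnj (\<psi> $ j))"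

definition pure_state :: "nat \<Rightarrow> complex vec \<Rightarrow> bool" where
  "pure_state n \<psi> \<longleftrightarrow> \<psi> \<in> carrier_vec n \<and> conjugate \<psi> \<bullet> \<psi> = 1"

(* (\<Theta> \<otimes> id_C)(\<sigma>) for \<sigma> on A \<otimes> C, product index (a,c) \<mapsto> a * dC + c;
   applied blockwise: (\<Theta>\<otimes>id)(\<Sigma> X_{cc'} \<otimes> |c><c'|) = \<Sigma> \<Theta>(X_{cc'}) \<otimes> |c><c'| *)
definition block :: "nat \<Rightarrow> nat \<Rightarrow> nat \<Rightarrow> nat \<Rightarrow> complex mat \<Rightarrow> complex mat" where
  "block dA dC c c' \<sigma> = mat dA dA (\<lambda>(a,a'). \<sigma> $$ (a * dC + c, a' * dC + c'))"

definition tensor_id :: "(complex mat \<Rightarrow> complex mat) \<Rightarrow> nat \<Rightarrow> nat \<Rightarrow> nat \<Rightarrow> complex mat \<Rightarrow> complex mat" where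
  "tensor_id \<Theta> dA dB dC \<sigma> = mat (dB * dC) (dB * dC)
     (\<lambda>(i,j). \<Theta> (block dA dC (i mod dC) (j mod dC) \<sigma>) $$ (i div dC, j div dC))"

definition channel :: "nat \<Rightarrow> nat \<Rightarrow> (complex mat \<Rightarrow> complex mat) \<Rightarrow> bool" where
  "channel dA dB \<Theta> \<longleftrightarrow>
     (\<forall>X \<in> carrier_mat dA dA. \<Theta> X \<in> carrier_mat dB dB) \<and>
     (\<forall>X \<in> carrier_mat dA dA. \<forall>Y \<in> carrier_mat dA dA. \<Theta> (X + Y) = \<Theta> X + \<Theta> Y) \<and>
     (\<forall>X \<in> carrier_mat dA dA. \<forall>a. \<Theta> (a \<cdot>\<^sub>m X) = a \<cdot>\<^sub>m \<Theta> X) \<and>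
     (\<forall>X \<in> carrier_mat dA dA. mtrace (\<Theta> X) = mtrace X) \<and>
     (\<forall>dC. \<forall>\<sigma>. psd (dA * dC) \<sigma> \<longrightarrow> psd (dB * dC) (tensor_id \<Theta> dA dB dC \<sigma>))"

definition incoherent_povm :: "nat \<Rightarrow> complex mat \<Rightarrow> complex mat \<Rightarrow> bool" where
  "incoherent_povm d M0 M1 \<longleftrightarrow> psd d M0 \<and> psd d M1 \<and> diagonal_mat M0 \<and> diagonal_mat M1 \<and>
     M0 + M1 = 1\<^sub>m d"

definition success_probs :: "real \<Rightarrow> (complex mat \<Rightarrow> complex mat) \<Rightarrow> (complex mat \<Rightarrow> complex mat)
    \<Rightarrow> nat \<Rightarrow> nat \<Rightarrow> real set" where
  "success_probs lam \<Theta>0 \<Theta>1 dA dB = {p. \<exists>dC \<sigma> M0 M1. dC > 0 \<and> density (dA * dC) \<sigma> \<and>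
      incoherent_povm (dB * dC) M0 M1 \<and>
      p = lam * Re (mtrace (M0 * tensor_id \<Theta>0 dA dB dC \<sigma>))
          + (1 - lam) * Re (mtrace (M1 * tensor_id \<Theta>1 dA dB dC \<sigma>))}"

definition P_c :: "real \<Rightarrow> (complex mat \<Rightarrow> complex mat) \<Rightarrow> (complex mat \<Rightarrow> complex mat)
    \<Rightarrow> nat \<Rightarrow> nat \<Rightarrow> real" where
  "P_c lam \<Theta>0 \<Theta>1 dA dB = Sup (success_probs lam \<Theta>0 \<Theta>1 dA dB)"

end

(*
  An incoherent measurement only sees the diagonal of (Theta_i (x) id)(sigma); its entry of index
  (b, c) is the b-th diagonal entry of Theta_i(sigma_c), where sigma_c is the c-th diagonal block
  of sigma.  Let L_b(X) be the b-th diagonal entry of lam Theta_0(X) - (1 - lam) Theta_1(X), so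
  that ||T(X)||_1 = sum_b |L_b(X)|.  A strategy whose POVM element M_0 has diagonal weights
  mu_bc in [0, 1] succeeds with probability (1 - lam) + sum_bc mu_bc Re L_b(sigma_c).
  Since mu Re z <= (|z| + Re z) / 2 and sum_b L_b(X) = (2 lam - 1) tr X, this is at most
  1/2 + 1/2 sum_c ||T(sigma_c)||_1.  The functional X |-> ||T(X)||_1 is sublinear and every psd
  matrix is a sum of rank-one projectors, so
  ||T(sigma_c)||_1 <= tr(sigma_c) max_psi ||T(psi psi^* )||_1,
  and the traces of the blocks add up to 1.  The bound is attained without ancilla by a
  maximising pure state psi and the projection M_0 onto the outcomes b with L_b(psi psi^* ) >= 0
  (these numbers are real because the channels are positive).
*)

theory Submission
  imports Defs "HOL-Analysis.Function_Topology"
begin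

section \<open>Quadratic forms of psd matrices\<close>

definition sesq :: "nat \<Rightarrow> complex mat \<Rightarrow> (nat \<Rightarrow> complex) \<Rightarrow> (nat \<Rightarrow> complex) \<Rightarrow> complex" where
  "sesq n M u w = (\<Sum>i<n. \<Sum>j<n. cnj (u i) * M $$ (i,j) * w j)"

definition unit_fun :: "nat \<Rightarrow> nat \<Rightarrow> complex" where
  "unit_fun k i = (if i = k then 1 else 0)"

lemma sum_mult_unit_fun: "j < n \<Longrightarrow> (\<Sum>k<n. f k * unit_fun j k) = f j"
  by (simp add: unit_fun_def if_distrib cong: if_cong)

lemma sesq_add_left: "sesq n M (\<lambda>i. u i + u' i) w = sesq n M u w + sesq n M u' w"
  unfolding sesq_def by (simp add: algebra_simps sum.distrib)

lemma sesq_add_right: "sesq n M u (\<lambda>i. w i + w' i) = sesq n M u w + sesq n M u w'"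
  unfolding sesq_def by (simp add: algebra_simps sum.distrib)

lemma sesq_scale_left: "sesq n M (\<lambda>i. c * u i) w = cnj c * sesq n M u w"
  unfolding sesq_def by (simp add: algebra_simps sum_distrib_left)

lemma sesq_scale_right: "sesq n M u (\<lambda>i. c * w i) = c * sesq n M u w"
  unfolding sesq_def by (simp add: algebra_simps sum_distrib_left)

lemma sesq_eq_sum_rows: "sesq n M u w = (\<Sum>i<n. cnj (u i) * (\<Sum>j<n. M $$ (i,j) * w j))"
  unfolding sesq_def by (simp add: sum_distrib_left mult.assoc)

lemma sesq_unit_left: "k < n \<Longrightarrow> sesq n M (unit_fun k) w = (\<Sum>j<n. M $$ (k,j) * w j)"
  unfolding sesq_eq_sum_rows
  by (simp add: unit_fun_def if_distrib[of cnj] if_distrib[of "\<lambda>x. x * _"] cong: if_cong)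

lemma sesq_unit_right: "k < n \<Longrightarrow> sesq n M u (unit_fun k) = (\<Sum>i<n. cnj (u i) * M $$ (i,k))"
  unfolding sesq_eq_sum_rows by (simp add: sum_mult_unit_fun mult.assoc)

lemma sesq_unit_unit: "i < n \<Longrightarrow> j < n \<Longrightarrow> sesq n M (unit_fun i) (unit_fun j) = M $$ (i,j)"
  by (simp add: sesq_unit_left sum_mult_unit_fun)

lemma conjugate_scalar_prod_mult_mat_vec:
  assumes "v \<in> carrier_vec n" "M \<in> carrier_mat n n"
  shows "conjugate v \<bullet> (M *\<^sub>v v) = sesq n M (($) v) (($) v)"
proof -
  have "(M *\<^sub>v v) $ i = (\<Sum>j<n. M $$ (i,j) * v $ j)" if "i < n" for i
    using assms that by (auto simp: scalar_prod_def lessThan_atLeast0 intro!: sum.cong)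
  then show ?thesis
    using assms unfolding sesq_eq_sum_rows scalar_prod_def
    by (auto simp: lessThan_atLeast0 intro!: sum.cong)
qed

lemma psd_iff_sesq:
  "psd n M \<longleftrightarrow> M \<in> carrier_mat n n \<and> (\<forall>w. Im (sesq n M w w) = 0 \<and> Re (sesq n M w w) \<ge> 0)"
proof -
  have "sesq n M w w = sesq n M (($) (vec n w)) (($) (vec n w))" for w
    unfolding sesq_def by (intro sum.cong refl) auto
  then show ?thesis
    unfolding psd_def Let_def
    by (metis (no_types, lifting) conjugate_scalar_prod_mult_mat_vec vec_carrier)
qed

lemma psd_carrier: "psd n M \<Longrightarrow> M \<in> carrier_mat n n"
  by (simp add: psd_def)

lemma psd_sesq:
  assumes "psd n M"
  shows "Im (sesq n M w w) = 0" "Re (sesq n M w w) \<ge> 0"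
  using assms by (auto simp: psd_iff_sesq)

lemma psd_diag:
  assumes "psd n M" "i < n"
  shows "Im (M $$ (i,i)) = 0" "Re (M $$ (i,i)) \<ge> 0"
  using psd_sesq[OF assms(1), of "unit_fun i"] by (simp_all add: sesq_unit_unit assms(2))

lemma psd_hermitian:
  assumes p: "psd n M" and i: "i < n" and j: "j < n"
  shows "M $$ (j,i) = cnj (M $$ (i,j))"
proof -
  have e1: "sesq n M (\<lambda>k. unit_fun i k + unit_fun j k) (\<lambda>k. unit_fun i k + unit_fun j k)
     = M $$ (i,i) + M $$ (i,j) + M $$ (j,i) + M $$ (j,j)"
    by (simp add: sesq_add_left sesq_add_right sesq_unit_unit i j)
  have e2: "sesq n M (\<lambda>k. unit_fun i k + \<i> * unit_fun j k) (\<lambda>k. unit_fun i k + \<i> * unit_fun j k)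
     = M $$ (i,i) + \<i> * M $$ (i,j) - \<i> * M $$ (j,i) + M $$ (j,j)"
    by (simp add: sesq_add_left sesq_add_right sesq_scale_left sesq_scale_right sesq_unit_unit i j
        algebra_simps)
  have "Im (M $$ (i,i)) = 0" "Im (M $$ (j,j)) = 0"
    using psd_diag p i j by auto
  then have "Im (M $$ (i,j) + M $$ (j,i)) = 0" "Re (M $$ (i,j) - M $$ (j,i)) = 0"
    using psd_sesq(1)[OF p, of "\<lambda>k. unit_fun i k + unit_fun j k"]
      psd_sesq(1)[OF p, of "\<lambda>k. unit_fun i k + \<i> * unit_fun j k"] e1 e2 by simp_all
  then show ?thesis by (simp add: complex_eq_iff)
qed

text \<open>If \<open>P u\<close> had a nonzero \<open>k\<close>-th entry, moving \<open>u\<close> slightly along the \<open>k\<close>-th coordinate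
  would make the form negative.\<close>

lemma psd_sesq_eq_0_imp_row_zero:
  assumes p: "psd n P" and z: "sesq n P u u = 0" and k: "k < n"
  shows "(\<Sum>j<n. P $$ (k,j) * u j) = 0"
proof (rule ccontr)
  define y where "y = (\<Sum>j<n. P $$ (k,j) * u j)"
  assume "(\<Sum>j<n. P $$ (k,j) * u j) \<noteq> 0"
  then have "y \<noteq> 0" by (simp add: y_def)
  have c1: "sesq n P u (unit_fun k) = cnj y"
    unfolding y_def sesq_unit_right[OF k] by (simp add: psd_hermitian[OF p _ k] mult.commute)
  have c2: "sesq n P (unit_fun k) u = y"
    unfolding y_def sesq_unit_left[OF k] ..
  obtain a where a: "P $$ (k,k) = complex_of_real a" "a \<ge> 0"
    using psd_diag[OF p k] by (metis complex_eq_iff complex_of_real_def complex.sel)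
  define r :: real where "r = 1 / (a + 1)"
  have r: "r > 0" "r * a < 1"
    using a(2) by (auto simp: r_def field_simps)
  define t where "t = - complex_of_real r * y"
  have "sesq n P (\<lambda>i. u i + t * unit_fun k i) (\<lambda>i. u i + t * unit_fun k i)
      = sesq n P u u + t * sesq n P u (unit_fun k) + cnj t * sesq n P (unit_fun k) u
        + cnj t * t * P $$ (k,k)"
    by (simp add: sesq_add_left sesq_add_right sesq_scale_left sesq_scale_right sesq_unit_unit k
        algebra_simps)
  also have "\<dots> = complex_of_real ((r * r * a - 2 * r) * (cmod y)\<^sup>2)"
    unfolding z c1 c2 t_def a(1) of_real_mult complex_norm_square by (simp add: algebra_simps)
  finally have "(r * r * a - 2 * r) * (cmod y)\<^sup>2 \<ge> 0"
    using psd_sesq(2)[OF p, of "\<lambda>i. u i + t * unit_fun k i"] by simp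
  moreover have "r * r * a - 2 * r < 0" "(cmod y)\<^sup>2 > 0"
    using r \<open>y \<noteq> 0\<close> by (simp_all add: algebra_simps)
  ultimately show False by (meson mult_neg_pos not_le)
qed

lemma psd_diag_zero_imp_zero:
  assumes p: "psd n X" and i: "i < n" and z: "X $$ (i,i) = 0" and k: "k < n"
  shows "X $$ (k,i) = 0" "X $$ (i,k) = 0"
proof -
  have "sesq n X (unit_fun i) (unit_fun i) = 0"
    using sesq_unit_unit[OF i i] z by simp
  from psd_sesq_eq_0_imp_row_zero[OF p this k] show "X $$ (k,i) = 0"
    by (simp add: sum_mult_unit_fun i)
  then show "X $$ (i,k) = 0"
    using psd_hermitian[OF p k i] by simp
qed

lemma psd_diag_eq_0_imp_eq_0:
  assumes "psd n X" and "\<And>i. i < n \<Longrightarrow> X $$ (i,i) = 0"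
  shows "X = 0\<^sub>m n n"
  using psd_diag_zero_imp_zero(1)[OF assms(1)] assms(2) psd_carrier[OF assms(1)]
  by (intro eq_matI) auto

lemma index_mult_mat_sum:
  assumes "A \<in> carrier_mat nr n" "B \<in> carrier_mat n nc" "i < nr" "j < nc"
  shows "(A * B) $$ (i,j) = (\<Sum>k<n. A $$ (i,k) * B $$ (k,j))"
  using assms by (simp add: scalar_prod_def lessThan_atLeast0)

lemma psd_add_mult_eq_0:
  assumes P: "psd n P" and Q: "psd n Q" and E: "E \<in> carrier_mat n n"
    and z: "(P + Q) * E = 0\<^sub>m n n"
  shows "P * E = 0\<^sub>m n n"
proof (rule eq_matI)
  fix k j assume "k < dim_row (0\<^sub>m n n :: complex mat)" "j < dim_col (0\<^sub>m n n :: complex mat)"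
  then have k: "k < n" and j: "j < n" by simp_all
  define u where "u l = E $$ (l,j)" for l
  have Pc: "P \<in> carrier_mat n n" and Qc: "Q \<in> carrier_mat n n"
    using P Q by (simp_all add: psd_carrier)
  have "(\<Sum>l<n. (P + Q) $$ (i,l) * u l) = 0" if "i < n" for i
    using index_mult_mat_sum[OF _ E that j, of "P + Q"] z that j Pc Qc by (simp add: u_def)
  then have "sesq n P u u + sesq n Q u u = 0"
    unfolding sesq_eq_sum_rows sum.distrib[symmetric] distrib_left[symmetric] sum.distrib[symmetric]
    using Pc Qc by (simp add: algebra_simps)
  with psd_sesq[OF P, of u] psd_sesq[OF Q, of u] have "sesq n P u u = 0"
    by (simp add: complex_eq_iff)
  from psd_sesq_eq_0_imp_row_zero[OF P this k] show "(P * E) $$ (k,j) = 0\<^sub>m n n $$ (k,j)"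
    using index_mult_mat_sum[OF Pc E k j] k j by (simp add: u_def)
qed (use E psd_carrier[OF P] in auto)

lemma hermitian_square_eq_0:
  assumes E: "E \<in> carrier_mat n n" and herm: "\<And>i j. i < n \<Longrightarrow> j < n \<Longrightarrow> E $$ (j,i) = cnj (E $$ (i,j))"
    and z: "E * E = 0\<^sub>m n n"
  shows "E = 0\<^sub>m n n"
proof (rule eq_matI)
  fix k l assume "k < dim_row (0\<^sub>m n n :: complex mat)" "l < dim_col (0\<^sub>m n n :: complex mat)"
  then have k: "k < n" and l: "l < n" by simp_all
  have "complex_of_real (\<Sum>j<n. (cmod (E $$ (k,j)))\<^sup>2) = (\<Sum>j<n. E $$ (k,j) * cnj (E $$ (k,j)))"
    by (simp only: of_real_sum complex_norm_square)
  also have "\<dots> = (E * E) $$ (k,k)"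
    unfolding index_mult_mat_sum[OF E E k k] by (intro sum.cong refl) (metis herm k lessThan_iff)
  also have "\<dots> = 0"
    using z k by simp
  finally have "(\<Sum>j<n. (cmod (E $$ (k,j)))\<^sup>2) = 0"
    by (simp only: of_real_eq_0_iff)
  then have "(cmod (E $$ (k,l)))\<^sup>2 = 0"
    using l by (subst (asm) sum_nonneg_eq_0_iff) auto
  then show "E $$ (k,l) = 0\<^sub>m n n $$ (k,l)"
    using k l by simp
qed (use E in auto)

section \<open>Trace norm of diagonal matrices\<close>

definition diag_of :: "nat \<Rightarrow> (nat \<Rightarrow> complex) \<Rightarrow> complex mat" where
  "diag_of m d = mat m m (\<lambda>(i,j). if i = j then d i else 0)"

lemma diag_of_carrier [simp]: "diag_of m d \<in> carrier_mat m m"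
  and diag_of_dims [simp]: "dim_row (diag_of m d) = m" "dim_col (diag_of m d) = m"
  and diag_of_index [simp]: "i < m \<Longrightarrow> j < m \<Longrightarrow> diag_of m d $$ (i,j) = (if i = j then d i else 0)"
  by (simp_all add: diag_of_def)

lemma mult_diag_of_index:
  assumes "S \<in> carrier_mat m m" "i < m" "j < m"
  shows "(S * diag_of m d) $$ (i,j) = S $$ (i,j) * d j"
  unfolding index_mult_mat_sum[OF assms(1) diag_of_carrier assms(2,3)]
  using assms(3) by (simp add: if_distrib[of "\<lambda>x. _ * x"] cong: if_cong)

lemma diag_of_mult_index:
  assumes "S \<in> carrier_mat m m" "i < m" "j < m"
  shows "(diag_of m d * S) $$ (i,j) = d i * S $$ (i,j)"
  unfolding index_mult_mat_sum[OF diag_of_carrier assms(1) assms(2,3)]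
  using assms(2) by (simp add: if_distrib[of "\<lambda>x. x * _"] cong: if_cong)

lemma diag_of_mult_diag_of: "diag_of m d * diag_of m e = diag_of m (\<lambda>i. d i * e i)"
  by (rule eq_matI)
    (auto simp: diag_of_mult_index[OF diag_of_carrier] index_mult_mat(2,3)
      simp del: index_mult_mat(1))

lemma psd_diag_of:
  assumes "\<And>i. i < m \<Longrightarrow> q i \<ge> 0"
  shows "psd m (diag_of m (\<lambda>i. complex_of_real (q i)))"
proof -
  have "sesq m (diag_of m (\<lambda>i. complex_of_real (q i))) w w
      = (\<Sum>i<m. cnj (w i) * (complex_of_real (q i) * w i))" for w
    unfolding sesq_eq_sum_rows by (simp add: if_distrib[of "\<lambda>x. x * _"] cong: if_cong)
  also have "\<dots> w = complex_of_real (\<Sum>i<m. q i * (cmod (w i))\<^sup>2)" for w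
    unfolding of_real_sum of_real_mult complex_norm_square by (simp add: mult_ac)
  finally have "sesq m (diag_of m (\<lambda>i. complex_of_real (q i))) w w
      = complex_of_real (\<Sum>i<m. q i * (cmod (w i))\<^sup>2)" for w .
  then show ?thesis
    unfolding psd_iff_sesq using assms by (auto intro!: sum_nonneg)
qed

lemma minus_mat_eq_0_imp_eq:
  fixes A B :: "'a :: ab_group_add mat"
  assumes "A \<in> carrier_mat n m" "B \<in> carrier_mat n m" "A - B = 0\<^sub>m n m"
  shows "A = B"
proof (rule eq_matI)
  fix i j assume "i < dim_row B" "j < dim_col B"
  then show "A $$ (i,j) = B $$ (i,j)"
    using arg_cong[OF assms(3), of "\<lambda>C. C $$ (i,j)"] assms(1,2) by simp
qed (use assms in auto)

lemma commute_diag_of_real_fun: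
  assumes S: "S \<in> carrier_mat m m"
    and comm: "S * diag_of m (\<lambda>i. complex_of_real (d i))
      = diag_of m (\<lambda>i. complex_of_real (d i)) * S"
  shows "S * diag_of m (\<lambda>i. complex_of_real (f (d i)))
    = diag_of m (\<lambda>i. complex_of_real (f (d i))) * S"
proof (rule eq_matI)
  fix i j assume "i < dim_row (diag_of m (\<lambda>i. complex_of_real (f (d i))) * S)"
    "j < dim_col (diag_of m (\<lambda>i. complex_of_real (f (d i))) * S)"
  then have ij: "i < m" "j < m"
    using S by simp_all
  have "S $$ (i,j) * d j = d i * S $$ (i,j)"
    using arg_cong[OF comm, of "\<lambda>A. A $$ (i,j)"]
    by (simp only: mult_diag_of_index[OF S ij] diag_of_mult_index[OF S ij])
  then have "S $$ (i,j) = 0 \<or> d i = d j"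
    by (auto simp: mult.commute)
  then show "(S * diag_of m (\<lambda>i. complex_of_real (f (d i)))) $$ (i,j)
      = (diag_of m (\<lambda>i. complex_of_real (f (d i))) * S) $$ (i,j)"
    unfolding mult_diag_of_index[OF S ij] diag_of_mult_index[OF S ij] by (auto simp: mult.commute)
qed (use S in auto)

text \<open>A psd \<open>S\<close> with \<open>S\<^sup>2 = Q\<close> commutes with \<open>Q\<close>, hence with \<open>R = \<surd>Q\<close>, so
  \<open>(S + R) (S - R) = 0\<close>; as \<open>S\<close> and \<open>R\<close> are psd, both annihilate the columns of \<open>S - R\<close>,
  whence \<open>(S - R)\<^sup>2 = 0\<close>.\<close>

lemma psd_square_root_diag_of_unique:
  assumes S: "psd m S" and sq: "S * S = diag_of m (\<lambda>i. complex_of_real (q i))"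
    and q: "\<And>i. i < m \<Longrightarrow> q i \<ge> 0"
  shows "S = diag_of m (\<lambda>i. complex_of_real (sqrt (q i)))"
proof -
  define R where "R = diag_of m (\<lambda>i. complex_of_real (sqrt (q i)))"
  have Sc: "S \<in> carrier_mat m m" using S by (rule psd_carrier)
  have Rc: "R \<in> carrier_mat m m"
    by (simp add: R_def)
  have R: "psd m R" unfolding R_def by (rule psd_diag_of) (simp add: q)
  have RR: "R * R = S * S"
    unfolding sq R_def diag_of_mult_diag_of
    by (rule eq_matI) (simp_all add: q flip: of_real_mult)
  have SR: "S * R = R * S"
    unfolding R_def
    by (rule commute_diag_of_real_fun[OF Sc])
      (use Sc in \<open>simp add: sq[symmetric] assoc_mult_mat[of _ m m]\<close>)
  have "(S + R) * (S - R) = S * S + R * S - (S * R + R * R)"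
    using Sc Rc by (simp add: add_mult_distrib_mat[of _ m m] mult_minus_distrib_mat[of _ m m])
  also have "\<dots> = 0\<^sub>m m m"
    unfolding RR SR using Sc Rc by (intro eq_matI) auto
  finally have SRz: "(S + R) * (S - R) = 0\<^sub>m m m" .
  have SRc: "S - R \<in> carrier_mat m m"
    using Rc by (rule minus_carrier_mat)
  have "(S - R) * (S - R) = S * (S - R) - R * (S - R)"
    using Sc Rc SRc by (rule minus_mult_distrib_mat)
  also have "S * (S - R) = 0\<^sub>m m m"
    by (rule psd_add_mult_eq_0[OF S R SRc SRz])
  also have "R * (S - R) = 0\<^sub>m m m"
    by (rule psd_add_mult_eq_0[OF R S SRc]) (use Sc Rc SRz in \<open>simp add: comm_add_mat[of S m m]\<close>)
  finally have sq0: "(S - R) * (S - R) = 0\<^sub>m m m"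
    by simp
  have herm: "(S - R) $$ (j,i) = cnj ((S - R) $$ (i,j))" if "i < m" "j < m" for i j
    using that Sc Rc psd_hermitian[OF S that] psd_hermitian[OF R that] by simp
  have "S - R = 0\<^sub>m m m"
    by (rule hermitian_square_eq_0[OF SRc herm sq0])
  then show ?thesis
    unfolding R_def[symmetric] by (rule minus_mat_eq_0_imp_eq[OF Sc Rc])
qed

lemma psd_sqrt_diag_of:
  assumes "\<And>i. i < m \<Longrightarrow> q i \<ge> 0"
  shows "psd_sqrt (diag_of m (\<lambda>i. complex_of_real (q i)))
    = diag_of m (\<lambda>i. complex_of_real (sqrt (q i)))"
  unfolding psd_sqrt_def diag_of_dims
proof (rule the_equality)
  show "psd m (diag_of m (\<lambda>i. complex_of_real (sqrt (q i)))) \<and>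
    diag_of m (\<lambda>i. complex_of_real (sqrt (q i))) * diag_of m (\<lambda>i. complex_of_real (sqrt (q i)))
      = diag_of m (\<lambda>i. complex_of_real (q i))"
    unfolding diag_of_mult_diag_of
    by (auto intro!: psd_diag_of eq_matI simp: assms simp flip: of_real_mult)
qed (use psd_square_root_diag_of_unique assms in blast)

lemma adj_mult_diagonal:
  assumes D: "D \<in> carrier_mat m m" and "diagonal_mat D"
  shows "adj D * D = diag_of m (\<lambda>i. complex_of_real ((cmod (D $$ (i,i)))\<^sup>2))"
proof (rule eq_matI)
  fix i j assume "i < dim_row (diag_of m (\<lambda>i. complex_of_real ((cmod (D $$ (i,i)))\<^sup>2)))"
    "j < dim_col (diag_of m (\<lambda>i. complex_of_real ((cmod (D $$ (i,i)))\<^sup>2)))"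
  then have i: "i < m" and j: "j < m" by simp_all
  have off: "D $$ (k,l) = 0" if "k < m" "l < m" "k \<noteq> l" for k l
    using assms that by (auto simp: diagonal_mat_def)
  have adj: "adj D \<in> carrier_mat m m"
    using D by (simp add: adj_def)
  have "(adj D * D) $$ (i,j)
      = (\<Sum>k<m. if k = i then (if i = j then cnj (D $$ (i,i)) * D $$ (i,i) else 0) else 0)"
    unfolding index_mult_mat_sum[OF adj D i j]
    by (intro sum.cong refl) (use D i j off in \<open>auto simp: adj_def\<close>)
  also have "\<dots> = (if i = j then cnj (D $$ (i,i)) * D $$ (i,i) else 0)"
    using i by simp
  finally show "(adj D * D) $$ (i,j)
      = diag_of m (\<lambda>i. complex_of_real ((cmod (D $$ (i,i)))\<^sup>2)) $$ (i,j)"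
    using i j by (simp add: complex_norm_square mult.commute del: of_real_power)
qed (use D in \<open>auto simp: adj_def\<close>)

lemma trace_norm_diagonal:
  assumes "D \<in> carrier_mat m m" and "diagonal_mat D"
  shows "trace_norm D = (\<Sum>i<m. cmod (D $$ (i,i)))"
proof -
  have "psd_sqrt (adj D * D) = diag_of m (\<lambda>i. complex_of_real (cmod (D $$ (i,i))))"
    using psd_sqrt_diag_of[of m "\<lambda>i. (cmod (D $$ (i,i)))\<^sup>2"]
    by (simp add: adj_mult_diagonal[OF assms])
  then show ?thesis
    unfolding trace_norm_def mtrace_def by (simp add: Re_sum)
qed

section \<open>Sublinear functionals on psd matrices\<close>

lemma proj_carrier [simp]: "v \<in> carrier_vec n \<Longrightarrow> proj v \<in> carrier_mat n n"
  and proj_dims [simp]: "dim_row (proj v) = dim_vec v" "dim_col (proj v) = dim_vec v"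
  and proj_index [simp]: "i < dim_vec v \<Longrightarrow> j < dim_vec v \<Longrightarrow> proj v $$ (i,j) = v $ i * cnj (v $ j)"
  by (simp_all add: proj_def)

lemma conjugate_scalar_prod_self:
  "v \<in> carrier_vec n \<Longrightarrow> conjugate v \<bullet> v = complex_of_real (\<Sum>i<n. (cmod (v $ i))\<^sup>2)"
  unfolding of_real_sum complex_norm_square scalar_prod_def
  by (auto simp: lessThan_atLeast0 mult.commute intro!: sum.cong)

lemma mtrace_proj: "v \<in> carrier_vec n \<Longrightarrow> mtrace (proj v) = conjugate v \<bullet> v"
  unfolding mtrace_def scalar_prod_def
  by (auto simp: lessThan_atLeast0 mult.commute intro!: sum.cong)

lemma psd_proj:
  assumes "v \<in> carrier_vec n"
  shows "psd n (proj v)"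
  unfolding psd_iff_sesq
proof (intro conjI allI)
  show "proj v \<in> carrier_mat n n" using assms by simp
  fix w :: "nat \<Rightarrow> complex"
  define z where "z = (\<Sum>i<n. cnj (w i) * v $ i)"
  have "cnj z = (\<Sum>j<n. cnj (v $ j) * w j)"
    by (simp add: z_def mult.commute)
  have "sesq n (proj v) w w = (\<Sum>i<n. \<Sum>j<n. (cnj (w i) * v $ i) * (cnj (v $ j) * w j))"
    unfolding sesq_def using assms by (intro sum.cong refl) (simp add: mult_ac)
  also have "\<dots> = z * cnj z"
    unfolding \<open>cnj z = _\<close> unfolding z_def sum_product ..
  also have "\<dots> = complex_of_real ((cmod z)\<^sup>2)"
    by (rule complex_norm_square[symmetric])
  finally show "Im (sesq n (proj v) w w) = 0" "Re (sesq n (proj v) w w) \<ge> 0"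
    by simp_all
qed

lemma density_proj: "pure_state n \<phi> \<Longrightarrow> density n (proj \<phi>)"
  unfolding density_def pure_state_def using psd_proj mtrace_proj by auto

lemma pure_state_vec_iff: "pure_state n (vec n y) \<longleftrightarrow> (\<Sum>i<n. (cmod (y i))\<^sup>2) = 1"
proof -
  have "(\<Sum>i<n. (cmod (vec n y $ i))\<^sup>2) = (\<Sum>i<n. (cmod (y i))\<^sup>2)"
    by (intro sum.cong) auto
  then show ?thesis
    unfolding pure_state_def using conjugate_scalar_prod_self[of "vec n y" n]
    by (metis of_real_eq_1_iff vec_carrier)
qed

lemma mtrace_add:
  "A \<in> carrier_mat n n \<Longrightarrow> B \<in> carrier_mat n n \<Longrightarrow> mtrace (A + B) = mtrace A + mtrace B"
  by (simp add: mtrace_def sum.distrib)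

definition sublinear_on :: "nat \<Rightarrow> (complex mat \<Rightarrow> real) \<Rightarrow> bool" where
  "sublinear_on n g \<longleftrightarrow>
     (\<forall>X \<in> carrier_mat n n. \<forall>Y \<in> carrier_mat n n. g (X + Y) \<le> g X + g Y) \<and>
     (\<forall>X \<in> carrier_mat n n. \<forall>c \<ge> 0. g (complex_of_real c \<cdot>\<^sub>m X) = c * g X)"

lemma sublinear_onD:
  assumes "sublinear_on n g" "X \<in> carrier_mat n n"
  shows "Y \<in> carrier_mat n n \<Longrightarrow> g (X + Y) \<le> g X + g Y"
    and "c \<ge> 0 \<Longrightarrow> g (complex_of_real c \<cdot>\<^sub>m X) = c * g X"
  using assms by (auto simp: sublinear_on_def)

lemma sublinear_on_zero: "sublinear_on n g \<Longrightarrow> g (0\<^sub>m n n) = 0"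
  using sublinear_onD(2)[of n g "0\<^sub>m n n" 0] by simp

lemma sublinear_on_proj_le:
  assumes g: "sublinear_on n g" and bound: "\<And>\<phi>. pure_state n \<phi> \<Longrightarrow> g (proj \<phi>) \<le> M"
    and v: "v \<in> carrier_vec n"
  shows "g (proj v) \<le> Re (mtrace (proj v)) * M"
proof -
  define r where "r = sqrt (\<Sum>i<n. (cmod (v $ i))\<^sup>2)"
  have tr: "Re (mtrace (proj v)) = r\<^sup>2"
    using v by (simp add: r_def mtrace_proj conjugate_scalar_prod_self sum_nonneg)
  show ?thesis
  proof (cases "r = 0")
    case True
    then have "v $ i = 0" if "i < n" for i
      using that by (simp add: r_def sum_nonneg_eq_0_iff)
    then have "proj v = 0\<^sub>m n n"
      using v by (intro eq_matI) auto
    then have "g (proj v) = 0"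
      using sublinear_on_zero[OF g] by simp
    then show ?thesis
      using True tr by simp
  next
    case False
    define \<phi> where "\<phi> = vec n (\<lambda>i. complex_of_real (1 / r) * v $ i)"
    have "(\<Sum>i<n. (cmod (complex_of_real (1 / r) * v $ i))\<^sup>2) = (\<Sum>i<n. (cmod (v $ i))\<^sup>2) / r\<^sup>2"
      unfolding sum_divide_distrib
      by (intro sum.cong refl) (use False in \<open>simp add: norm_divide power_divide field_simps\<close>)
    also have "\<dots> = 1"
      using False by (simp add: r_def sum_nonneg)
    finally have "pure_state n \<phi>"
      unfolding \<phi>_def pure_state_vec_iff .
    have "proj v = complex_of_real (r\<^sup>2) \<cdot>\<^sub>m proj \<phi>"
      using v False by (intro eq_matI) (auto simp: \<phi>_def field_simps power2_eq_square)
    then have "g (proj v) = r\<^sup>2 * g (proj \<phi>)"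
      using sublinear_onD(2)[OF g, of "proj \<phi>" "r\<^sup>2"] by (simp add: \<phi>_def)
    also have "\<dots> \<le> r\<^sup>2 * M"
      using bound[OF \<open>pure_state n \<phi>\<close>] by (simp add: mult_left_mono)
    finally show ?thesis
      using tr by (simp add: mult.commute)
  qed
qed

text \<open>The form of the Schur complement at \<open>w\<close> is the form of \<open>X\<close> at \<open>w + t e\<^sub>k\<close> for a suitable \<open>t\<close>.\<close>

lemma psd_schur_complement:
  assumes X: "psd n X" and k: "k < n" and Xkk: "X $$ (k,k) = complex_of_real a" and a: "a > 0"
  shows "psd n (mat n n (\<lambda>(i,j). X $$ (i,j) - X $$ (i,k) * cnj (X $$ (j,k)) / complex_of_real a))"
    (is "psd n ?X'")
  unfolding psd_iff_sesq
proof (intro conjI allI)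
  show "?X' \<in> carrier_mat n n" by simp
  fix w :: "nat \<Rightarrow> complex"
  define s where "s = (\<Sum>i<n. cnj (w i) * X $$ (i,k))"
  define t where "t = - cnj s / complex_of_real a"
  have cs: "cnj s = (\<Sum>j<n. cnj (X $$ (j,k)) * w j)"
    unfolding s_def by (simp add: mult.commute)
  have "sesq n ?X' w w = (\<Sum>i<n. \<Sum>j<n. cnj (w i) * X $$ (i,j) * w j
      - cnj (w i) * X $$ (i,k) * (cnj (X $$ (j,k)) * w j) / complex_of_real a)"
    unfolding sesq_def by (intro sum.cong refl) (simp add: algebra_simps)
  also have "\<dots> = sesq n X w w
      - (\<Sum>i<n. \<Sum>j<n. cnj (w i) * X $$ (i,k) * (cnj (X $$ (j,k)) * w j)) / complex_of_real a"
    unfolding sesq_def by (simp add: sum_subtractf sum_divide_distrib)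
  also have "(\<Sum>i<n. \<Sum>j<n. cnj (w i) * X $$ (i,k) * (cnj (X $$ (j,k)) * w j)) = s * cnj s"
    unfolding cs unfolding s_def sum_product ..
  also have "sesq n X w w - s * cnj s / complex_of_real a
      = sesq n X w w + t * sesq n X w (unit_fun k) + cnj t * sesq n X (unit_fun k) w
        + cnj t * t * X $$ (k,k)"
  proof -
    have "sesq n X w (unit_fun k) = s"
      unfolding sesq_unit_right[OF k] s_def ..
    moreover have "sesq n X (unit_fun k) w = cnj s"
      unfolding sesq_unit_left[OF k] cs by (intro sum.cong refl) (simp add: psd_hermitian[OF X k])
    ultimately show ?thesis
      unfolding t_def Xkk using a by (simp add: field_simps power2_eq_square)
  qed
  also have "\<dots> = sesq n X (\<lambda>i. w i + t * unit_fun k i) (\<lambda>i. w i + t * unit_fun k i)"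
    by (simp add: sesq_add_left sesq_add_right sesq_scale_left sesq_scale_right sesq_unit_unit k
        algebra_simps)
  finally show "Im (sesq n ?X' w w) = 0" "Re (sesq n ?X' w w) \<ge> 0"
    using psd_sesq[OF X] by simp_all
qed

lemma psd_split_proj:
  assumes X: "psd n X" and k: "k < n"
  obtains v X' where "v \<in> carrier_vec n" "psd n X'" "X = X' + proj v" "X' $$ (k,k) = 0"
    "\<And>i. i < n \<Longrightarrow> X $$ (i,i) = 0 \<Longrightarrow> X' $$ (i,i) = 0"
proof (cases "X $$ (k,k) = 0")
  case True
  show ?thesis
  proof (rule that[of "0\<^sub>v n" X])
    show "X = X + proj (0\<^sub>v n)"
      using psd_carrier[OF X] by (intro eq_matI) auto
  qed (use X True in auto)
next
  case False
  define a where "a = Re (X $$ (k,k))"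
  have Xkk: "X $$ (k,k) = complex_of_real a"
    using psd_diag(1)[OF X k] by (simp add: a_def complex_eq_iff)
  have a: "a > 0"
    using psd_diag(2)[OF X k] False Xkk by auto
  define v where "v = vec n (\<lambda>i. X $$ (i,k) / complex_of_real (sqrt a))"
  define X' where
    "X' = mat n n (\<lambda>(i,j). X $$ (i,j) - X $$ (i,k) * cnj (X $$ (j,k)) / complex_of_real a)"
  have X'i: "X' $$ (i,j) = X $$ (i,j) - X $$ (i,k) * cnj (X $$ (j,k)) / complex_of_real a"
    if "i < n" "j < n" for i j
    using that by (simp add: X'_def)
  have v: "v \<in> carrier_vec n"
    by (simp add: v_def)
  have split: "X = X' + proj v"
  proof (rule eq_matI)
    fix i j assume "i < dim_row (X' + proj v)" "j < dim_col (X' + proj v)"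
    then have ij: "i < n" "j < n" by (auto simp: v_def)
    have "proj v $$ (i,j) = X $$ (i,k) * cnj (X $$ (j,k))
        / (complex_of_real (sqrt a) * complex_of_real (sqrt a))"
      using ij by (simp add: v_def)
    also have "\<dots> = X $$ (i,k) * cnj (X $$ (j,k)) / complex_of_real a"
      using a by (simp flip: of_real_mult)
    finally show "X $$ (i,j) = (X' + proj v) $$ (i,j)"
      using ij by (simp add: X'i v_def)
  qed (use psd_carrier[OF X] in \<open>auto simp: X'_def v_def\<close>)
  have "psd n X'"
    unfolding X'_def by (rule psd_schur_complement[OF X k Xkk a])
  moreover have "X' $$ (k,k) = 0"
    using k a by (simp add: X'i Xkk power2_eq_square)
  moreover have "X' $$ (i,i) = 0" if "i < n" "X $$ (i,i) = 0" for i
    using that psd_diag_zero_imp_zero(2)[OF X that(1) that(2) k] by (simp add: X'i)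
  ultimately show ?thesis
    using that[OF v _ split] by blast
qed

lemma sublinear_on_le_mtrace:
  assumes g: "sublinear_on n g" and bound: "\<And>\<phi>. pure_state n \<phi> \<Longrightarrow> g (proj \<phi>) \<le> M"
    and X: "psd n X"
  shows "g X \<le> Re (mtrace X) * M"
proof -
  have "g X \<le> Re (mtrace X) * M"
    if "psd n X" "\<forall>i. k \<le> i \<longrightarrow> i < n \<longrightarrow> X $$ (i,i) = 0" for k X
    using that
  proof (induction k arbitrary: X)
    case 0
    then have "X = 0\<^sub>m n n"
      by (intro psd_diag_eq_0_imp_eq_0) auto
    then show ?case
      using sublinear_on_zero[OF g] by (simp add: mtrace_def)
  next
    case (Suc k)
    show ?case
    proof (cases "k < n")
      case False
      then show ?thesis
        using Suc by auto
    next
      case True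
      then obtain v X' where v: "v \<in> carrier_vec n" and X': "psd n X'" and split: "X = X' + proj v"
        and "X' $$ (k,k) = 0" and "\<And>i. i < n \<Longrightarrow> X $$ (i,i) = 0 \<Longrightarrow> X' $$ (i,i) = 0"
        using psd_split_proj[OF Suc.prems(1)] by blast
      then have "X' $$ (i,i) = 0" if "k \<le> i" "i < n" for i
        using Suc.prems(2) that by (cases "i = k") auto
      then have IH: "g X' \<le> Re (mtrace X') * M"
        using Suc.IH[OF X'] by blast
      have X'c: "X' \<in> carrier_mat n n"
        using X' by (rule psd_carrier)
      have "g X \<le> g X' + g (proj v)"
        unfolding split using sublinear_onD(1)[OF g X'c] v by simp
      also have "\<dots> \<le> Re (mtrace X') * M + Re (mtrace (proj v)) * M"
        using IH sublinear_on_proj_le[OF g bound v] by simp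
      also have "\<dots> = Re (mtrace X) * M"
        unfolding split using X'c v by (simp add: mtrace_add algebra_simps)
      finally show ?thesis .
    qed
  qed
  from this[of X n] X show ?thesis by simp
qed

section \<open>Maximising over pure states\<close>

definition mat_unit :: "nat \<Rightarrow> nat \<Rightarrow> nat \<Rightarrow> complex mat" where
  "mat_unit n i j = mat n n (\<lambda>(a,b). if a = i \<and> b = j then 1 else 0)"

lemma linear_functional_expand:
  fixes l :: "complex mat \<Rightarrow> complex"
  assumes add: "\<And>X Y. X \<in> carrier_mat n n \<Longrightarrow> Y \<in> carrier_mat n n \<Longrightarrow> l (X + Y) = l X + l Y"
    and scale: "\<And>X a. X \<in> carrier_mat n n \<Longrightarrow> l (a \<cdot>\<^sub>m X) = a * l X"
    and X: "X \<in> carrier_mat n n"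
  shows "l X = (\<Sum>i<n. \<Sum>j<n. X $$ (i,j) * l (mat_unit n i j))"
proof -
  define X_on where "X_on A = mat n n (\<lambda>p. if p \<in> A then X $$ p else 0)" for A
  have X_on: "X_on A \<in> carrier_mat n n" for A
    by (simp add: X_on_def)
  have "l (X_on A) = (\<Sum>p\<in>A. X $$ p * l (mat_unit n (fst p) (snd p)))" if "finite A" for A
    using that
  proof (induction A rule: finite_induct)
    case empty
    have "X_on {} = 0 \<cdot>\<^sub>m X_on {}"
      by (rule eq_matI) (auto simp: X_on_def)
    then show ?case
      using scale[OF X_on, of 0 "{}"] by simp
  next
    case (insert p A)
    have "X_on (insert p A) = X_on A + X $$ p \<cdot>\<^sub>m mat_unit n (fst p) (snd p)"
      by (rule eq_matI) (use insert(2) in \<open>auto simp: X_on_def mat_unit_def\<close>)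
    then show ?case
      using insert add[OF X_on, of "X $$ p \<cdot>\<^sub>m mat_unit n (fst p) (snd p)"]
        scale[of "mat_unit n (fst p) (snd p)"]
      by (simp add: mat_unit_def)
  qed
  moreover have "X_on ({..<n} \<times> {..<n}) = X"
    by (rule eq_matI) (use X in \<open>auto simp: X_on_def\<close>)
  ultimately have "l X = (\<Sum>p\<in>{..<n} \<times> {..<n}. X $$ p * l (mat_unit n (fst p) (snd p)))"
    by (metis finite_cartesian_product finite_lessThan)
  then show ?thesis
    by (simp add: sum.cartesian_product split_beta)
qed

lemmas continuous_on_coordinate [continuous_intros] =
  continuous_on_product_then_coordinatewise[OF continuous_on_id]

lemma compact_coordinate_sphere:
  "compact {x :: nat \<Rightarrow> complex. (\<forall>i \<ge> n. x i = 0) \<and> (\<Sum>i<n. (cmod (x i))\<^sup>2) = 1}"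
proof -
  define Q :: "complex set" where
    "Q = (\<lambda>p. complex_of_real (fst p) + \<i> * complex_of_real (snd p)) ` ({-1..1} \<times> {-1..1})"
  have "compact Q"
    unfolding Q_def by (intro compact_continuous_image continuous_intros compact_Times compact_Icc)
  have Q: "z \<in> Q" if "cmod z \<le> 1" for z
    using abs_Re_le_cmod[of z] abs_Im_le_cmod[of z] that unfolding Q_def
    by (intro image_eqI[of z _ "(Re z, Im z)"]) (auto simp: complex_eq_iff)
  define B where "B i = (if i < n then Q else {0})" for i
  have "compactin (product_topology (\<lambda>i. euclidean) UNIV) (PiE UNIV B)"
    unfolding compactin_PiE using \<open>compact Q\<close> by (auto simp: B_def compactin_euclidean_iff)
  then have "compact (PiE UNIV B)"
    by (simp add: euclidean_product_topology compactin_euclidean_iff)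
  moreover have "closed {x::nat \<Rightarrow> complex. (\<Sum>i<n. (cmod (x i))\<^sup>2) = 1}"
    by (intro closed_Collect_eq continuous_intros)
  ultimately have compact: "compact (PiE UNIV B \<inter> {x. (\<Sum>i<n. (cmod (x i))\<^sup>2) = 1})"
    by (rule compact_Int_closed)
  have "cmod (x i) \<le> 1" if "(\<Sum>i<n. (cmod (x i))\<^sup>2) = 1" "i < n" for x i
  proof -
    have "(cmod (x i))\<^sup>2 \<le> (\<Sum>i<n. (cmod (x i))\<^sup>2)"
      by (rule member_le_sum) (use that in auto)
    then show ?thesis
      using that(1) by (simp add: power_le_one_iff abs_le_square_iff)
  qed
  moreover have "x i = 0" if "x \<in> PiE UNIV B" "n \<le> i" for x i
    using that by (auto simp: B_def PiE_iff dest: spec[of _ i])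
  ultimately have "PiE UNIV B \<inter> {x. (\<Sum>i<n. (cmod (x i))\<^sup>2) = 1}
      = {x. (\<forall>i \<ge> n. x i = 0) \<and> (\<Sum>i<n. (cmod (x i))\<^sup>2) = 1}"
    using Q by (auto simp: B_def PiE_iff not_less)
  with compact show ?thesis by simp
qed

lemma exists_max_pure_state:
  fixes F :: "complex vec \<Rightarrow> real"
  assumes n: "n > 0" and cont: "continuous_on UNIV (\<lambda>x::nat \<Rightarrow> complex. F (vec n x))"
  shows "\<exists>\<psi>. pure_state n \<psi> \<and> (\<forall>\<phi>. pure_state n \<phi> \<longrightarrow> F \<phi> \<le> F \<psi>)"
proof -
  define S where "S = {x :: nat \<Rightarrow> complex. (\<forall>i \<ge> n. x i = 0) \<and> (\<Sum>i<n. (cmod (x i))\<^sup>2) = 1}"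
  have S: "x \<in> S \<longleftrightarrow> pure_state n (vec n x) \<and> (\<forall>i \<ge> n. x i = 0)" for x
    by (auto simp: S_def pure_state_vec_iff)
  have "(\<lambda>i. if i = 0 then 1 else 0) \<in> S"
    using n by (simp add: S_def if_distrib[of cmod] if_distrib[of "\<lambda>x. x\<^sup>2"] cong: if_cong)
  then have "S \<noteq> {}" by blast
  moreover have "continuous_on S (\<lambda>x. F (vec n x))"
    using cont by (rule continuous_on_subset) simp
  ultimately obtain x0 where "x0 \<in> S" and max: "\<And>y. y \<in> S \<Longrightarrow> F (vec n y) \<le> F (vec n x0)"
    using continuous_attains_sup[OF compact_coordinate_sphere[of n, folded S_def]] by blast
  have "F \<phi> \<le> F (vec n x0)" if "pure_state n \<phi>" for \<phi>
  proof -
    have "vec n (\<lambda>i. if i < n then \<phi> $ i else 0) = \<phi>"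
      using that by (intro eq_vecI) (auto simp: pure_state_def)
    then show ?thesis
      using max[of "\<lambda>i. if i < n then \<phi> $ i else 0"] that by (simp add: S)
  qed
  then show ?thesis
    using \<open>x0 \<in> S\<close> S by blast
qed

section \<open>Diagonal blocks and the extended channel\<close>

lemma add_mult_less_mult: "c < C \<Longrightarrow> b < P \<Longrightarrow> c + b * C < P * (C::nat)"
proof -
  assume "c < C" "b < P"
  then have "c + b * C < Suc b * C" by simp
  also have "\<dots> \<le> P * C" using \<open>b < P\<close> by (intro mult_le_mono1) simp
  finally show ?thesis .
qed

lemma sum_lessThan_mult: "sum h {..<P * Q} = (\<Sum>i<P. \<Sum>j<Q. h (j + i * (Q::nat)))"
proof -
  have "sum h {i * Q..<i * Q + Q} = (\<Sum>j<Q. h (j + i * Q))" for i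
    using sum.shift_bounds_nat_ivl[of h 0 "i * Q" Q] by (simp add: atLeast0LessThan add.commute)
  then show ?thesis
    using sum.nat_group[of h Q P] by (simp add: mult.commute)
qed

lemma sum_mod_eq_select:
  assumes "c < (d::nat)"
  shows "(\<Sum>k<m * d. if k mod d = c then g k else 0) = (\<Sum>a<m. g (a * d + c))"
  unfolding sum_lessThan_mult using assms by (simp add: add.commute if_distrib cong: if_cong)

lemma block_carrier [simp]: "block dA dC c c' \<sigma> \<in> carrier_mat dA dA"
  and block_dims [simp]: "dim_row (block dA dC c c' \<sigma>) = dA" "dim_col (block dA dC c c' \<sigma>) = dA"
  and block_index [simp]:
    "a < dA \<Longrightarrow> a' < dA \<Longrightarrow> block dA dC c c' \<sigma> $$ (a,a') = \<sigma> $$ (a * dC + c, a' * dC + c')"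
  by (simp_all add: block_def)

lemma psd_block:
  assumes p: "psd (dA * dC) \<sigma>" and c: "c < dC"
  shows "psd dA (block dA dC c c \<sigma>)"
  unfolding psd_iff_sesq
proof (intro conjI allI block_carrier)
  fix w :: "nat \<Rightarrow> complex"
  define w' where "w' k = (if k mod dC = c then w (k div dC) else 0)" for k
  have "(\<Sum>l<dA * dC. \<sigma> $$ (k,l) * w' l) = (\<Sum>a'<dA. \<sigma> $$ (k, a' * dC + c) * w a')" for k
    unfolding w'_def
    using sum_mod_eq_select[OF c, where m = dA and g = "\<lambda>l. \<sigma> $$ (k,l) * w (l div dC)"] c
    by (simp add: if_distrib[of "\<lambda>x. _ * x"] cong: if_cong)
  then have "sesq (dA * dC) \<sigma> w' w' = sesq dA (block dA dC c c \<sigma>) w w"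
    unfolding sesq_eq_sum_rows w'_def
    using sum_mod_eq_select[OF c, where m = dA
        and g = "\<lambda>k. cnj (w (k div dC)) * (\<Sum>a'<dA. \<sigma> $$ (k, a' * dC + c) * w a')"] c
    by (simp add: if_distrib[of cnj] if_distrib[of "\<lambda>x. x * _"] cong: if_cong)
  then show "Im (sesq dA (block dA dC c c \<sigma>) w w) = 0" "Re (sesq dA (block dA dC c c \<sigma>) w w) \<ge> 0"
    using psd_sesq[OF p, of w'] by simp_all
qed

lemma mtrace_blocks:
  assumes "\<sigma> \<in> carrier_mat (dA * dC) (dA * dC)"
  shows "mtrace \<sigma> = (\<Sum>c<dC. mtrace (block dA dC c c \<sigma>))"
proof -
  have "mtrace \<sigma> = (\<Sum>a<dA. \<Sum>c<dC. \<sigma> $$ (a * dC + c, a * dC + c))"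
    unfolding mtrace_def using assms by (simp add: sum_lessThan_mult add.commute)
  also have "\<dots> = (\<Sum>c<dC. mtrace (block dA dC c c \<sigma>))"
    unfolding mtrace_def by (subst sum.swap) simp
  finally show ?thesis .
qed

lemma tensor_id_carrier [simp]: "tensor_id \<Theta> dA dB dC \<sigma> \<in> carrier_mat (dB * dC) (dB * dC)"
  by (simp add: tensor_id_def)

lemma tensor_id_diag:
  assumes "b < dB" "c < dC"
  shows "tensor_id \<Theta> dA dB dC \<sigma> $$ (c + b * dC, c + b * dC) = \<Theta> (block dA dC c c \<sigma>) $$ (b,b)"
  using assms add_mult_less_mult[OF assms(2,1)] by (simp add: tensor_id_def)

lemma block_one: "X \<in> carrier_mat dA dA \<Longrightarrow> block dA 1 0 0 X = X"
  by (intro eq_matI) auto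

lemma tensor_id_one:
  assumes "X \<in> carrier_mat dA dA" "\<Theta> X \<in> carrier_mat dB dB"
  shows "tensor_id \<Theta> dA dB 1 X = \<Theta> X"
  using assms block_one[OF assms(1)] by (intro eq_matI) (auto simp: tensor_id_def)

lemma re_mtrace_diagonal_mult:
  assumes M: "psd N M" "diagonal_mat M" and Y: "Y \<in> carrier_mat N N"
  shows "Re (mtrace (M * Y)) = (\<Sum>k<N. Re (M $$ (k,k)) * Re (Y $$ (k,k)))"
proof -
  have Mc: "M \<in> carrier_mat N N" using M(1) by (rule psd_carrier)
  have "(M * Y) $$ (k,k) = (\<Sum>l<N. if l = k then M $$ (k,k) * Y $$ (k,k) else 0)" if "k < N" for k
    unfolding index_mult_mat_sum[OF Mc Y that that]
    by (intro sum.cong refl) (use M(2) Mc that in \<open>auto simp: diagonal_mat_def\<close>)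
  then show ?thesis
    unfolding mtrace_def using Mc psd_diag(1)[OF M(1)] by (simp add: Re_sum)
qed

section \<open>Success probability of an incoherent strategy\<close>

lemma
  assumes "channel dA dB \<Theta>"
  shows channel_carrier: "X \<in> carrier_mat dA dA \<Longrightarrow> \<Theta> X \<in> carrier_mat dB dB"
    and channel_add: "X \<in> carrier_mat dA dA \<Longrightarrow> Y \<in> carrier_mat dA dA \<Longrightarrow> \<Theta> (X + Y) = \<Theta> X + \<Theta> Y"
    and channel_scale: "X \<in> carrier_mat dA dA \<Longrightarrow> \<Theta> (a \<cdot>\<^sub>m X) = a \<cdot>\<^sub>m \<Theta> X"
    and channel_mtrace: "X \<in> carrier_mat dA dA \<Longrightarrow> mtrace (\<Theta> X) = mtrace X"
    and channel_tensor_id_psd: "psd (dA * dC) \<sigma> \<Longrightarrow> psd (dB * dC) (tensor_id \<Theta> dA dB dC \<sigma>)"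
  using assms unfolding channel_def by blast+

lemma channel_psd:
  assumes "channel dA dB \<Theta>" and "psd dA X"
  shows "psd dB (\<Theta> X)"
proof -
  have "X \<in> carrier_mat dA dA" using assms(2) by (rule psd_carrier)
  then have "tensor_id \<Theta> dA dB 1 X = \<Theta> X"
    by (intro tensor_id_one channel_carrier[OF assms(1)])
  then show ?thesis
    using channel_tensor_id_psd[OF assms(1), of 1 X] assms(2) by simp
qed

lemma channel_sum_blocks_diag:
  assumes "channel dA dB \<Theta>" and "density (dA * dC) \<sigma>"
  shows "(\<Sum>b<dB. \<Sum>c<dC. Re (\<Theta> (block dA dC c c \<sigma>) $$ (b,b))) = 1"
proof -
  have \<sigma>: "\<sigma> \<in> carrier_mat (dA * dC) (dA * dC)" and "mtrace \<sigma> = 1"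
    using assms(2) by (auto simp: density_def psd_carrier)
  have "(\<Sum>b<dB. \<Sum>c<dC. Re (\<Theta> (block dA dC c c \<sigma>) $$ (b,b)))
      = (\<Sum>c<dC. Re (mtrace (\<Theta> (block dA dC c c \<sigma>))))"
    unfolding mtrace_def using carrier_matD(1)[OF channel_carrier[OF assms(1) block_carrier]]
    by (subst sum.swap) (simp add: Re_sum)
  also have "\<dots> = Re (mtrace \<sigma>)"
    unfolding mtrace_blocks[OF \<sigma>] by (simp add: Re_sum channel_mtrace[OF assms(1)])
  finally show ?thesis
    using \<open>mtrace \<sigma> = 1\<close> by simp
qed

lemma re_mtrace_mult_tensor_id:
  assumes "psd (dB * dC) M" "diagonal_mat M"
  shows "Re (mtrace (M * tensor_id \<Theta> dA dB dC \<sigma>))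
    = (\<Sum>b<dB. \<Sum>c<dC. Re (M $$ (c + b * dC, c + b * dC)) * Re (\<Theta> (block dA dC c c \<sigma>) $$ (b,b)))"
  unfolding re_mtrace_diagonal_mult[OF assms tensor_id_carrier] sum_lessThan_mult
  by (intro sum.cong refl) (simp add: tensor_id_diag)

lemma incoherent_povm_diag:
  assumes M: "incoherent_povm N M0 M1" and k: "k < N"
  shows "Re (M1 $$ (k,k)) = 1 - Re (M0 $$ (k,k))" "0 \<le> Re (M0 $$ (k,k))" "Re (M0 $$ (k,k)) \<le> 1"
proof -
  have p: "psd N M0" "psd N M1" and "M0 + M1 = 1\<^sub>m N"
    using M by (auto simp: incoherent_povm_def)
  have "M0 $$ (k,k) + M1 $$ (k,k) = (M0 + M1) $$ (k,k)"
    using k psd_carrier[OF p(2)] by simp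
  also have "\<dots> = 1"
    using \<open>M0 + M1 = 1\<^sub>m N\<close> k by simp
  finally show "Re (M1 $$ (k,k)) = 1 - Re (M0 $$ (k,k))"
    by (simp add: complex_eq_iff)
  then show "0 \<le> Re (M0 $$ (k,k))" "Re (M0 $$ (k,k)) \<le> 1"
    using psd_diag(2)[OF p(1) k] psd_diag(2)[OF p(2) k] by simp_all
qed

lemma mult_Re_le_half: "0 \<le> (\<mu>::real) \<Longrightarrow> \<mu> \<le> 1 \<Longrightarrow> \<mu> * Re z \<le> (cmod z + Re z) / 2"
  using abs_Re_le_cmod[of z] mult_left_le_one_le[of "Re z" \<mu>] mult_nonneg_nonpos[of \<mu> "Re z"]
  by (cases "Re z \<ge> 0") auto

context
  fixes dA dB :: nat and \<Theta>0 \<Theta>1 :: "complex mat \<Rightarrow> complex mat" and lam :: real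
  assumes channel0: "channel dA dB \<Theta>0" and channel1: "channel dA dB \<Theta>1"
begin

definition helstrom :: "complex mat \<Rightarrow> complex mat" where
  "helstrom X = dephase (complex_of_real lam \<cdot>\<^sub>m \<Theta>0 X - complex_of_real (1 - lam) \<cdot>\<^sub>m \<Theta>1 X)"

definition helstrom_diag :: "nat \<Rightarrow> complex mat \<Rightarrow> complex" where
  "helstrom_diag b X =
    complex_of_real lam * \<Theta>0 X $$ (b,b) - complex_of_real (1 - lam) * \<Theta>1 X $$ (b,b)"

lemma dim_Theta [simp]:
  assumes "X \<in> carrier_mat dA dA"
  shows "dim_row (\<Theta>0 X) = dB" "dim_col (\<Theta>0 X) = dB" "dim_row (\<Theta>1 X) = dB" "dim_col (\<Theta>1 X) = dB"
  using channel_carrier[OF channel0 assms] channel_carrier[OF channel1 assms] by auto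

lemma helstrom_diag_add:
  assumes "b < dB" "X \<in> carrier_mat dA dA" "Y \<in> carrier_mat dA dA"
  shows "helstrom_diag b (X + Y) = helstrom_diag b X + helstrom_diag b Y"
  using assms
  by (simp add: helstrom_diag_def channel_add[OF channel0] channel_add[OF channel1] algebra_simps)

lemma helstrom_diag_scale:
  assumes "b < dB" "X \<in> carrier_mat dA dA"
  shows "helstrom_diag b (a \<cdot>\<^sub>m X) = a * helstrom_diag b X"
  using assms
  by (simp add: helstrom_diag_def channel_scale[OF channel0] channel_scale[OF channel1]
      algebra_simps)

lemma sum_helstrom_diag:
  assumes "X \<in> carrier_mat dA dA"
  shows "(\<Sum>b<dB. helstrom_diag b X) = complex_of_real (2 * lam - 1) * mtrace X"
proof -
  have "(\<Sum>b<dB. helstrom_diag b X)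
      = complex_of_real lam * mtrace (\<Theta>0 X) - complex_of_real (1 - lam) * mtrace (\<Theta>1 X)"
    unfolding helstrom_diag_def mtrace_def using assms by (simp add: sum_subtractf sum_distrib_left)
  then show ?thesis
    using channel_mtrace[OF channel0 assms] channel_mtrace[OF channel1 assms]
    by (simp add: algebra_simps)
qed

lemma trace_norm_helstrom:
  assumes "X \<in> carrier_mat dA dA"
  shows "trace_norm (helstrom X) = (\<Sum>b<dB. cmod (helstrom_diag b X))"
proof -
  have "helstrom X \<in> carrier_mat dB dB" "diagonal_mat (helstrom X)"
    using assms by (auto simp: helstrom_def dephase_def diagonal_mat_def)
  then have "trace_norm (helstrom X) = (\<Sum>b<dB. cmod (helstrom X $$ (b,b)))"
    by (rule trace_norm_diagonal)
  also have "\<dots> = (\<Sum>b<dB. cmod (helstrom_diag b X))"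
    using assms by (intro sum.cong refl) (simp add: helstrom_def dephase_def helstrom_diag_def)
  finally show ?thesis .
qed

lemma sublinear_trace_norm_helstrom: "sublinear_on dA (\<lambda>X. trace_norm (helstrom X))"
  unfolding sublinear_on_def
proof (intro conjI ballI allI impI)
  fix X Y :: "complex mat" assume X: "X \<in> carrier_mat dA dA" and Y: "Y \<in> carrier_mat dA dA"
  have "(\<Sum>b<dB. cmod (helstrom_diag b (X + Y)))
      \<le> (\<Sum>b<dB. cmod (helstrom_diag b X) + cmod (helstrom_diag b Y))"
    by (intro sum_mono) (simp add: helstrom_diag_add X Y norm_triangle_ineq)
  then show "trace_norm (helstrom (X + Y)) \<le> trace_norm (helstrom X) + trace_norm (helstrom Y)"
    using X Y by (simp add: trace_norm_helstrom sum.distrib)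
next
  fix X :: "complex mat" and c :: real assume X: "X \<in> carrier_mat dA dA" and "c \<ge> 0"
  then show "trace_norm (helstrom (complex_of_real c \<cdot>\<^sub>m X)) = c * trace_norm (helstrom X)"
    by (simp add: trace_norm_helstrom helstrom_diag_scale norm_mult sum_distrib_left)
qed

lemma continuous_trace_norm_helstrom_proj:
  "continuous_on UNIV (\<lambda>x. trace_norm (helstrom (proj (vec dA x))))"
proof -
  have "trace_norm (helstrom (proj (vec dA x)))
      = (\<Sum>b<dB. cmod (\<Sum>i<dA. \<Sum>j<dA. x i * cnj (x j) * helstrom_diag b (mat_unit dA i j)))" for x
    unfolding trace_norm_helstrom[OF proj_carrier[OF vec_carrier]]
    by (intro sum.cong refl arg_cong[where f = cmod])
      (subst linear_functional_expand[where l = "helstrom_diag _"];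
        auto simp: helstrom_diag_add helstrom_diag_scale intro!: sum.cong)
  then show ?thesis
    by (simp only:) (intro continuous_intros)
qed

lemma exists_max_helstrom:
  assumes "dA > 0"
  shows "\<exists>\<psi>. pure_state dA \<psi> \<and>
    (\<forall>\<phi>. pure_state dA \<phi> \<longrightarrow> trace_norm (helstrom (proj \<phi>)) \<le> trace_norm (helstrom (proj \<psi>)))"
  using exists_max_pure_state[OF assms continuous_trace_norm_helstrom_proj] .

lemma helstrom_diag_real:
  assumes "psd dA X" "b < dB"
  shows "Im (helstrom_diag b X) = 0"
  using psd_diag(1)[OF channel_psd[OF channel0 assms(1)] assms(2)]
    psd_diag(1)[OF channel_psd[OF channel1 assms(1)] assms(2)]
  by (simp add: helstrom_diag_def)

lemma success_prob_eq:
  assumes \<sigma>: "density (dA * dC) \<sigma>" and M: "incoherent_povm (dB * dC) M0 M1"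
  shows "lam * Re (mtrace (M0 * tensor_id \<Theta>0 dA dB dC \<sigma>))
      + (1 - lam) * Re (mtrace (M1 * tensor_id \<Theta>1 dA dB dC \<sigma>))
    = (1 - lam) + (\<Sum>b<dB. \<Sum>c<dC. Re (M0 $$ (c + b * dC, c + b * dC))
        * Re (helstrom_diag b (block dA dC c c \<sigma>)))"
proof -
  define \<mu> where "\<mu> b c = Re (M0 $$ (c + b * dC, c + b * dC))" for b c
  define f0 where "f0 b c = Re (\<Theta>0 (block dA dC c c \<sigma>) $$ (b,b))" for b c
  define f1 where "f1 b c = Re (\<Theta>1 (block dA dC c c \<sigma>) $$ (b,b))" for b c
  have povm: "psd (dB * dC) M0" "diagonal_mat M0" "psd (dB * dC) M1" "diagonal_mat M1"
    using M by (auto simp: incoherent_povm_def)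
  have M1: "Re (M1 $$ (c + b * dC, c + b * dC)) = 1 - \<mu> b c" if "b < dB" "c < dC" for b c
    unfolding \<mu>_def by (rule incoherent_povm_diag(1)[OF M add_mult_less_mult[OF that(2,1)]])
  have "lam * Re (mtrace (M0 * tensor_id \<Theta>0 dA dB dC \<sigma>))
      + (1 - lam) * Re (mtrace (M1 * tensor_id \<Theta>1 dA dB dC \<sigma>))
    = (\<Sum>b<dB. \<Sum>c<dC. lam * (\<mu> b c * f0 b c) + (1 - lam) * ((1 - \<mu> b c) * f1 b c))"
    unfolding re_mtrace_mult_tensor_id[OF povm(1,2)] re_mtrace_mult_tensor_id[OF povm(3,4)]
    by (simp add: M1 \<mu>_def f0_def f1_def sum_distrib_left sum.distrib)
  also have "\<dots> = (\<Sum>b<dB. \<Sum>c<dC. (1 - lam) * f1 b c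
      + \<mu> b c * Re (helstrom_diag b (block dA dC c c \<sigma>)))"
    by (intro sum.cong refl) (simp add: helstrom_diag_def f0_def f1_def algebra_simps)
  also have "\<dots> = (1 - lam) * (\<Sum>b<dB. \<Sum>c<dC. f1 b c)
      + (\<Sum>b<dB. \<Sum>c<dC. \<mu> b c * Re (helstrom_diag b (block dA dC c c \<sigma>)))"
    by (simp add: sum_distrib_left sum.distrib)
  finally show ?thesis
    using channel_sum_blocks_diag[OF channel1 \<sigma>] by (simp add: f1_def \<mu>_def)
qed

lemma success_prob_le:
  assumes p: "p \<in> success_probs lam \<Theta>0 \<Theta>1 dA dB"
    and bound: "\<And>\<phi>. pure_state dA \<phi> \<Longrightarrow> trace_norm (helstrom (proj \<phi>)) \<le> M"
  shows "p \<le> 1/2 + 1/2 * M"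
proof -
  obtain dC \<sigma> M0 M1 where \<sigma>: "density (dA * dC) \<sigma>" and M: "incoherent_povm (dB * dC) M0 M1"
    and p: "p = lam * Re (mtrace (M0 * tensor_id \<Theta>0 dA dB dC \<sigma>))
      + (1 - lam) * Re (mtrace (M1 * tensor_id \<Theta>1 dA dB dC \<sigma>))"
    using assms(1) unfolding success_probs_def by blast
  define Z where "Z c = block dA dC c c \<sigma>" for c
  have \<sigma>c: "\<sigma> \<in> carrier_mat (dA * dC) (dA * dC)" and "mtrace \<sigma> = 1"
    using \<sigma> by (auto simp: density_def psd_carrier)
  have Z: "psd dA (Z c)" if "c < dC" for c
    unfolding Z_def using \<sigma> that by (auto simp: density_def intro: psd_block)
  have trZ: "(\<Sum>c<dC. Re (mtrace (Z c))) = 1"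
    using mtrace_blocks[OF \<sigma>c] \<open>mtrace \<sigma> = 1\<close> unfolding Z_def by (simp flip: Re_sum)
  have "p = (1 - lam)
      + (\<Sum>b<dB. \<Sum>c<dC. Re (M0 $$ (c + b * dC, c + b * dC)) * Re (helstrom_diag b (Z c)))"
    unfolding p Z_def by (rule success_prob_eq[OF \<sigma> M])
  also have "\<dots> \<le> (1 - lam)
      + (\<Sum>b<dB. \<Sum>c<dC. (cmod (helstrom_diag b (Z c)) + Re (helstrom_diag b (Z c))) / 2)"
    using incoherent_povm_diag(2,3)[OF M add_mult_less_mult]
    by (intro add_left_mono sum_mono mult_Re_le_half) auto
  also have "\<dots> = (1 - lam)
      + (\<Sum>c<dC. trace_norm (helstrom (Z c)) + (2 * lam - 1) * Re (mtrace (Z c))) / 2"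
    unfolding sum_divide_distrib[symmetric] sum.distrib
    by (subst (1 2) sum.swap)
      (simp add: trace_norm_helstrom Z_def Re_sum[symmetric] sum_helstrom_diag)
  also have "\<dots> \<le> (1 - lam) + (\<Sum>c<dC. Re (mtrace (Z c)) * M + (2 * lam - 1) * Re (mtrace (Z c))) / 2"
    using sublinear_on_le_mtrace[OF sublinear_trace_norm_helstrom bound Z]
    by (intro add_left_mono divide_right_mono sum_mono) auto
  also have "\<dots> = (1 - lam) + (M + (2 * lam - 1)) / 2"
    using trZ by (simp add: sum.distrib flip: sum_distrib_left sum_distrib_right)
  also have "\<dots> = 1/2 + 1/2 * M"
    by (simp add: field_simps)
  finally show ?thesis .
qed

lemma success_prob_attained:
  assumes \<psi>: "pure_state dA \<psi>"
  shows "1/2 + 1/2 * trace_norm (helstrom (proj \<psi>)) \<in> success_probs lam \<Theta>0 \<Theta>1 dA dB"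
proof -
  define P where "P = proj \<psi>"
  have P: "density dA P" "P \<in> carrier_mat dA dA"
    using density_proj[OF \<psi>] by (auto simp: P_def density_def psd_carrier)
  define q where "q b = (if Re (helstrom_diag b P) \<ge> 0 then 1 else 0 :: real)" for b
  define M0 where "M0 = diag_of dB (\<lambda>b. complex_of_real (q b))"
  define M1 where "M1 = diag_of dB (\<lambda>b. complex_of_real (1 - q b))"
  have "psd dB M0" "psd dB M1"
    unfolding M0_def M1_def by (intro psd_diag_of; simp add: q_def)+
  then have M: "incoherent_povm (dB * 1) M0 M1"
    unfolding incoherent_povm_def by (auto simp: M0_def M1_def diagonal_mat_def intro!: eq_matI)
  have "lam * Re (mtrace (M0 * tensor_id \<Theta>0 dA dB 1 P))
      + (1 - lam) * Re (mtrace (M1 * tensor_id \<Theta>1 dA dB 1 P))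
    = (1 - lam) + (\<Sum>b<dB. q b * Re (helstrom_diag b P))"
    using success_prob_eq[OF _ M, of P] P block_one by (simp add: M0_def)
  also have "\<dots> = (1 - lam) + (\<Sum>b<dB. (cmod (helstrom_diag b P) + Re (helstrom_diag b P)) / 2)"
    using helstrom_diag_real[of P] P(1)
    by (intro arg_cong2[where f = "(+)"] sum.cong refl) (auto simp: q_def cmod_def density_def)
  also have "\<dots> = 1/2 + 1/2 * trace_norm (helstrom P)"
    using sum_helstrom_diag[OF P(2)] P(1)
    by (simp add: trace_norm_helstrom[OF P(2)] sum.distrib Re_sum[symmetric] density_def
        flip: sum_divide_distrib) (simp add: field_simps)
  finally show ?thesis
    unfolding success_probs_def mem_Collect_eq P_def[symmetric] using M P(1)
    by (intro exI[of _ 1] exI[of _ P] exI[of _ M0] exI[of _ M1]) simp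
qed

lemma P_c_eq_max_helstrom:
  assumes "dA > 0"
  shows "\<exists>\<psi>. pure_state dA \<psi> \<and>
    (\<forall>\<phi>. pure_state dA \<phi> \<longrightarrow>
      trace_norm (helstrom (proj \<phi>)) \<le> trace_norm (helstrom (proj \<psi>))) \<and>
    P_c lam \<Theta>0 \<Theta>1 dA dB = 1/2 + 1/2 * trace_norm (helstrom (proj \<psi>))"
proof -
  obtain \<psi> where \<psi>: "pure_state dA \<psi>" and max: "\<forall>\<phi>. pure_state dA \<phi> \<longrightarrow>
      trace_norm (helstrom (proj \<phi>)) \<le> trace_norm (helstrom (proj \<psi>))"
    using exists_max_helstrom[OF assms] by blast
  have "P_c lam \<Theta>0 \<Theta>1 dA dB = 1/2 + 1/2 * trace_norm (helstrom (proj \<psi>))"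
    unfolding P_c_def
    by (rule cSup_eq_maximum) (use success_prob_attained[OF \<psi>] success_prob_le max in auto)
  with \<psi> max show ?thesis by blast
qed

end

theorem proposition17:
  fixes \<Theta>0 \<Theta>1 :: "complex mat \<Rightarrow> complex mat" and dA dB :: nat and lam :: real
  assumes "dA > 0" and "dB > 0"
    and "channel dA dB \<Theta>0" and "channel dA dB \<Theta>1"
    and "0 \<le> lam" and "lam \<le> 1"
  defines "T \<equiv> (\<lambda>X. dephase (complex_of_real lam \<cdot>\<^sub>m \<Theta>0 X - complex_of_real (1 - lam) \<cdot>\<^sub>m \<Theta>1 X))"
  shows "\<exists>\<psi>. pure_state dA \<psi> \<and>
           (\<forall>\<phi>. pure_state dA \<phi> \<longrightarrow> trace_norm (T (proj \<phi>)) \<le> trace_norm (T (proj \<psi>))) \<and>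
           P_c lam \<Theta>0 \<Theta>1 dA dB = 1/2 + 1/2 * trace_norm (T (proj \<psi>))"
proof -
  have "T = helstrom \<Theta>0 \<Theta>1 lam"
    by (simp add: T_def helstrom_def[OF assms(3,4)] fun_eq_iff)
  then show ?thesis
    using P_c_eq_max_helstrom[OF assms(3,4,1)] by simp
qed

end
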